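(* Let $\mathbf X=(X_1,\dots,X_n)$ have mutually independent components, each taking values in a finite set $V_i\subset\mathbb{R}$, let $f:\mathbb{R}^n\to\mathbb{R}$ be arbitrary, let $c_1,\dots,c_n\ge 0$ and $C\ge0$, and set $\overline C=\big(\sum_{i=1}^n c_i\big)-C$. Define $\overline{\mathrm{EVar}}(S)=\mathrm{EVar}([n]\setminus S)$ for $S\subseteq[n]$. Then: (i) $\overline{\mathrm{EVar}}$ is monotone non-decreasing ($S_1\subseteq S_2\Rightarrow \overline{\mathrm{EVar}}(S_1)\le\overline{\mathrm{EVar}}(S_2)$) and submodular (for $S_1\subset S_2\subseteq[n]$ and $x\in[n]\setminus S_2$, $\overline{\mathrm{EVar}}(S_1\cup\{x\})-\overline{\mathrm{EVar}}(S_1)\ge \overline{\mathrm{EVar}}(S_2\cup\{x\})-\overline{\mathrm{EVar}}(S_2)$); (ii) for every $\alpha\ge1$, a set $S$ satisfies $\sum_{i\in S}c_i\ge\overline C$ and $\overline{\mathrm{EVar}}(S)\le\alpha\cdot\min\{\overline{\mathrm{EVar}}(S'):\sum_{i\in S'}c_i\ge \overline C\}$ if and only if $T=[n]\setminus S$ satisfies $\sum_{i\in T}c_i\le C$ and $\mathrm{EVar}(T)\le\alpha\cdot\min\{\mathrm{EVar}(T'):\sum_{i\in T'}c_i\le C\}$.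
   Context: For $T=\{i_1<\dots<i_k\}\subseteq[n]$ write $\mathbf X_T=(X_{i_1},\dots,X_{i_k})$ and $\mathbf V_T=V_{i_1}\times\dots\times V_{i_k}$. Define $$\mathrm{EVar}(T)=\sum_{\mathbf v\in\mathbf V_T,\ \Pr[\mathbf X_T=\mathbf v]>0}\Pr[\mathbf X_T=\mathbf v]\cdot \mathrm{Var}\big(f(\mathbf X)\mid \mathbf X_T=\mathbf v\big),$$ with $\mathrm{EVar}(\emptyset)=\mathrm{Var}(f(\mathbf X))$. The MinVar problem is: minimize $\mathrm{EVar}(T)$ over $T\subseteq[n]$ subject to $\sum_{i\in T}c_i\le C$ (here $c_i$ is the cost of cleaning object $i$ and $C$ the budget). *)

theory Defs
  imports "HOL-Probability.Probability"
begin

text \<open>Indices are 0-based: [n] is rendered as {..<n}. A random vector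
 X = (X_0,...,X_{n-1}) is a family X :: nat => 'a => real on a probability
 space M; a point of R^n is a function nat => real restricted to {..<n}.\<close>

definition cond_exp_event :: "'a measure \<Rightarrow> 'a set \<Rightarrow> ('a \<Rightarrow> real) \<Rightarrow> real" where
  "cond_exp_event M A g = (LINT \<omega>:A|M. g \<omega>) / measure M A"

definition cond_var_event :: "'a measure \<Rightarrow> 'a set \<Rightarrow> ('a \<Rightarrow> real) \<Rightarrow> real" where
  "cond_var_event M A g = cond_exp_event M A (\<lambda>\<omega>. (g \<omega> - cond_exp_event M A g)\<^sup>2)"

definition event_eq :: "'a measure \<Rightarrow> (nat \<Rightarrow> 'a \<Rightarrow> real) \<Rightarrow> nat set \<Rightarrow> (nat \<Rightarrow> real) \<Rightarrow> 'a set" where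
  "event_eq M X T v = {\<omega> \<in> space M. \<forall>i\<in>T. X i \<omega> = v i}"

definition EVar :: "'a measure \<Rightarrow> nat \<Rightarrow> (nat \<Rightarrow> 'a \<Rightarrow> real) \<Rightarrow> (nat \<Rightarrow> real set)
    \<Rightarrow> ((nat \<Rightarrow> real) \<Rightarrow> real) \<Rightarrow> nat set \<Rightarrow> real" where
  "EVar M n X V f T =
     (\<Sum>v\<in>PiE T V. if measure M (event_eq M X T v) > 0
        then measure M (event_eq M X T v) *
             cond_var_event M (event_eq M X T v) (\<lambda>\<omega>. f (\<lambda>i\<in>{..<n}. X i \<omega>))
        else 0)"

definition EVarbar :: "'a measure \<Rightarrow> nat \<Rightarrow> (nat \<Rightarrow> 'a \<Rightarrow> real) \<Rightarrow> (nat \<Rightarrow> real set)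
    \<Rightarrow> ((nat \<Rightarrow> real) \<Rightarrow> real) \<Rightarrow> nat set \<Rightarrow> real" where
  "EVarbar M n X V f S = EVar M n X V f ({..<n} - S)"

end

theory Submission
  imports Defs
begin

text \<open>For Y = f(X) we have EVar T = E[Y^2] - Q T, where Q T, the sum over all w of
  (\<integral> Y over {X_T = w})^2 / Pr[X_T = w], is the second moment of E[Y | X_T].
  Adding a coordinate to T refines the cells, and Sedrakyan's form of the Cauchy-Schwarz
  inequality shows that Q grows; hence the complemented objective is monotone.
  For submodularity it suffices to add two coordinates x \<noteq> y: by independence the cell
  probabilities factor as Pr[X_x = a] Pr[X_y = b] Pr[X_T = u], and on each cell u the inequality
  Q(T \<union> {x}) + Q(T \<union> {y}) \<le> Q(T \<union> {x, y}) + Q T becomes an inequality for a matrix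
  with product weights, proved by centring its columns and applying Sedrakyan's inequality once
  more. Part (ii) is the bijection S \<mapsto> [n] - S between the feasible sets of the two problems.\<close>

lemma Sedrakyan_inequality:
  fixes z p :: "'b \<Rightarrow> real"
  assumes "finite A" "\<And>a. a \<in> A \<Longrightarrow> p a \<ge> 0" "\<And>a. a \<in> A \<Longrightarrow> p a = 0 \<Longrightarrow> z a = 0"
  shows "(\<Sum>a\<in>A. z a)\<^sup>2 / (\<Sum>a\<in>A. p a) \<le> (\<Sum>a\<in>A. (z a)\<^sup>2 / p a)"
  using assms
proof (induction A rule: finite_induct)
  case empty
  then show ?case by simp
next
  case (insert x F)
  define Z P where "Z = (\<Sum>a\<in>F. z a)" and "P = (\<Sum>a\<in>F. p a)"
  have "P \<ge> 0"
    unfolding P_def using insert by (auto intro: sum_nonneg)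
  have "Z = 0" if "P = 0"
  proof -
    have "\<forall>a\<in>F. p a = 0"
      using that insert sum_nonneg_eq_0_iff[of F p] unfolding P_def by auto
    then show ?thesis
      unfolding Z_def using insert by auto
  qed
  have two_terms: "(z x + Z)\<^sup>2 / (p x + P) \<le> (z x)\<^sup>2 / p x + Z\<^sup>2 / P"
  proof (cases "p x = 0 \<or> P = 0")
    case True
    then show ?thesis using insert \<open>P = 0 \<Longrightarrow> Z = 0\<close> by auto
  next
    case False
    then have "p x > 0" "P > 0" using insert.prems(1)[of x] \<open>P \<ge> 0\<close> by auto
    have "0 \<le> (z x * P - Z * p x)\<^sup>2" by simp
    then have "(z x + Z)\<^sup>2 * (p x * P) \<le> ((z x)\<^sup>2 * P + Z\<^sup>2 * p x) * (p x + P)"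
      by (simp add: power2_eq_square algebra_simps)
    then show ?thesis using \<open>p x > 0\<close> \<open>P > 0\<close> by (simp add: field_simps)
  qed
  also have "\<dots> \<le> (z x)\<^sup>2 / p x + (\<Sum>a\<in>F. (z a)\<^sup>2 / p a)"
    unfolding Z_def P_def using insert by auto
  finally show ?case
    using insert unfolding Z_def P_def by simp
qed

lemma sum_centred_square_divide:
  fixes z \<alpha> :: "'b \<Rightarrow> real"
  assumes "finite A" "(\<Sum>a\<in>A. \<alpha> a) = 1" "\<And>a. a \<in> A \<Longrightarrow> \<alpha> a = 0 \<Longrightarrow> z a = 0"
  shows "(\<Sum>a\<in>A. (z a - \<alpha> a * (\<Sum>b\<in>A. z b))\<^sup>2 / \<alpha> a)
       = (\<Sum>a\<in>A. (z a)\<^sup>2 / \<alpha> a) - (\<Sum>b\<in>A. z b)\<^sup>2"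
proof -
  define S where "S = (\<Sum>b\<in>A. z b)"
  have "(z a - \<alpha> a * S)\<^sup>2 / \<alpha> a = (z a)\<^sup>2 / \<alpha> a - 2 * S * z a + S\<^sup>2 * \<alpha> a" if "a \<in> A" for a
    using assms(3)[OF that] by (cases "\<alpha> a = 0") (auto simp: field_simps power2_eq_square)
  then have "(\<Sum>a\<in>A. (z a - \<alpha> a * S)\<^sup>2 / \<alpha> a)
      = (\<Sum>a\<in>A. (z a)\<^sup>2 / \<alpha> a) - 2 * S * S + S\<^sup>2 * (\<Sum>a\<in>A. \<alpha> a)"
    by (simp add: sum.distrib sum_subtractf sum_distrib_left S_def)
  then show ?thesis
    unfolding S_def assms(2) by (simp add: power2_eq_square)
qed

lemma marginal_square_sums_le:
  fixes I :: "'b \<Rightarrow> 'c \<Rightarrow> real" and \<alpha> :: "'b \<Rightarrow> real" and \<beta> :: "'c \<Rightarrow> real"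
  assumes A: "finite A" and B: "finite B"
    and \<alpha>_nonneg: "\<And>a. a \<in> A \<Longrightarrow> \<alpha> a \<ge> 0" and \<beta>_nonneg: "\<And>b. b \<in> B \<Longrightarrow> \<beta> b \<ge> 0"
    and \<alpha>_sum: "(\<Sum>a\<in>A. \<alpha> a) = 1" and \<beta>_sum: "(\<Sum>b\<in>B. \<beta> b) = 1"
    and zero: "\<And>a b. a \<in> A \<Longrightarrow> b \<in> B \<Longrightarrow> \<alpha> a * \<beta> b = 0 \<Longrightarrow> I a b = 0"
  shows "(\<Sum>b\<in>B. (\<Sum>a\<in>A. I a b)\<^sup>2 / \<beta> b) + (\<Sum>a\<in>A. (\<Sum>b\<in>B. I a b)\<^sup>2 / \<alpha> a)
       \<le> (\<Sum>b\<in>B. \<Sum>a\<in>A. (I a b)\<^sup>2 / (\<alpha> a * \<beta> b)) + (\<Sum>b\<in>B. \<Sum>a\<in>A. I a b)\<^sup>2"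
proof -
  define col row where "col b = (\<Sum>a\<in>A. I a b)" and "row a = (\<Sum>b\<in>B. I a b)" for a b
  define total where "total = (\<Sum>b\<in>B. col b)"
  \<comment> \<open>Centring every column by its \<alpha>-share turns both sides into sums over rows, which
    Sedrakyan's inequality with the weights \<beta> compares row by row.\<close>
  define J where "J a b = I a b - \<alpha> a * col b" for a b
  have J_zero: "J a b = 0" if "a \<in> A" "b \<in> B" "\<beta> b = 0" for a b
    using that zero unfolding J_def col_def by auto
  have "(\<Sum>b\<in>B. \<Sum>a\<in>A. (I a b)\<^sup>2 / (\<alpha> a * \<beta> b)) - (\<Sum>b\<in>B. (col b)\<^sup>2 / \<beta> b)
      = (\<Sum>b\<in>B. ((\<Sum>a\<in>A. (I a b)\<^sup>2 / \<alpha> a) - (col b)\<^sup>2) / \<beta> b)"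
    by (simp add: sum_subtractf[symmetric] diff_divide_distrib sum_divide_distrib divide_divide_eq_left)
  also have "\<dots> = (\<Sum>b\<in>B. (\<Sum>a\<in>A. (J a b)\<^sup>2 / \<alpha> a) / \<beta> b)"
    unfolding J_def col_def using zero by (simp add: sum_centred_square_divide[OF A \<alpha>_sum])
  also have "\<dots> = (\<Sum>a\<in>A. (\<Sum>b\<in>B. (J a b)\<^sup>2 / \<beta> b) / \<alpha> a)"
    unfolding sum_divide_distrib by (subst sum.swap) (simp add: divide_divide_eq_left mult.commute)
  finally have lhs_gap: "(\<Sum>b\<in>B. \<Sum>a\<in>A. (I a b)\<^sup>2 / (\<alpha> a * \<beta> b)) - (\<Sum>b\<in>B. (col b)\<^sup>2 / \<beta> b)
      = (\<Sum>a\<in>A. (\<Sum>b\<in>B. (J a b)\<^sup>2 / \<beta> b) / \<alpha> a)" .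
  have "total = (\<Sum>a\<in>A. row a)"
    unfolding total_def col_def row_def by (rule sum.swap)
  then have "(\<Sum>a\<in>A. (row a)\<^sup>2 / \<alpha> a) - total\<^sup>2 = (\<Sum>a\<in>A. (row a - \<alpha> a * total)\<^sup>2 / \<alpha> a)"
    using zero unfolding row_def by (simp add: sum_centred_square_divide[OF A \<alpha>_sum])
  also have "\<dots> = (\<Sum>a\<in>A. (\<Sum>b\<in>B. J a b)\<^sup>2 / \<alpha> a)"
    by (simp add: J_def sum_subtractf row_def total_def sum_distrib_left)
  finally have rhs_gap: "(\<Sum>a\<in>A. (row a)\<^sup>2 / \<alpha> a) - total\<^sup>2 = (\<Sum>a\<in>A. (\<Sum>b\<in>B. J a b)\<^sup>2 / \<alpha> a)" .
  have "(\<Sum>a\<in>A. (\<Sum>b\<in>B. J a b)\<^sup>2 / \<alpha> a) \<le> (\<Sum>a\<in>A. (\<Sum>b\<in>B. (J a b)\<^sup>2 / \<beta> b) / \<alpha> a)"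
  proof (rule sum_mono)
    fix a assume "a \<in> A"
    have "(\<Sum>b\<in>B. J a b)\<^sup>2 \<le> (\<Sum>b\<in>B. (J a b)\<^sup>2 / \<beta> b)"
      using Sedrakyan_inequality[OF B, of \<beta> "J a"] \<beta>_nonneg J_zero \<open>a \<in> A\<close> \<beta>_sum by auto
    then show "(\<Sum>b\<in>B. J a b)\<^sup>2 / \<alpha> a \<le> (\<Sum>b\<in>B. (J a b)\<^sup>2 / \<beta> b) / \<alpha> a"
      using \<alpha>_nonneg[OF \<open>a \<in> A\<close>] by (simp add: divide_right_mono)
  qed
  then show ?thesis
    using lhs_gap rhs_gap unfolding col_def row_def total_def by linarith
qed

lemma marginal_square_sums_le_scaled:
  fixes I :: "'b \<Rightarrow> 'c \<Rightarrow> real" and \<alpha> :: "'b \<Rightarrow> real" and \<beta> :: "'c \<Rightarrow> real" and c :: real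
  assumes "finite A" "finite B" "\<And>a. a \<in> A \<Longrightarrow> \<alpha> a \<ge> 0" "\<And>b. b \<in> B \<Longrightarrow> \<beta> b \<ge> 0"
    "(\<Sum>a\<in>A. \<alpha> a) = 1" "(\<Sum>b\<in>B. \<beta> b) = 1"
    "\<And>a b. a \<in> A \<Longrightarrow> b \<in> B \<Longrightarrow> \<alpha> a * \<beta> b = 0 \<Longrightarrow> I a b = 0"
    and "c \<ge> 0"
  shows "(\<Sum>b\<in>B. (\<Sum>a\<in>A. I a b)\<^sup>2 / (\<beta> b * c)) + (\<Sum>a\<in>A. (\<Sum>b\<in>B. I a b)\<^sup>2 / (\<alpha> a * c))
       \<le> (\<Sum>b\<in>B. \<Sum>a\<in>A. (I a b)\<^sup>2 / (\<alpha> a * (\<beta> b * c))) + (\<Sum>b\<in>B. \<Sum>a\<in>A. I a b)\<^sup>2 / c"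
  using divide_right_mono[OF marginal_square_sums_le[OF assms(1-7)] \<open>c \<ge> 0\<close>]
  by (simp add: add_divide_distrib sum_divide_distrib divide_divide_eq_left mult.assoc)

lemma mono_if_insert_le:
  fixes g :: "'a set \<Rightarrow> 'b::preorder"
  assumes insert_le: "\<And>T y. insert y T \<subseteq> N \<Longrightarrow> y \<notin> T \<Longrightarrow> g T \<le> g (insert y T)"
    and "T' \<subseteq> T" "T \<subseteq> N" "finite T"
  shows "g T' \<le> g T"
proof -
  have "g T' \<le> g (T' \<union> D)" if "finite D" "D \<subseteq> N - T'" for D
    using that
  proof (induction D rule: finite_induct)
    case (insert d D)
    then have "g (T' \<union> D) \<le> g (insert d (T' \<union> D))"
      using \<open>T' \<subseteq> T\<close> \<open>T \<subseteq> N\<close> by (intro insert_le) auto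
    then show ?case
      using insert by (auto intro: order_trans)
  qed simp
  from this[of "T - T'"] have "g T' \<le> g (T' \<union> (T - T'))"
    using assms by auto
  also have "T' \<union> (T - T') = T"
    using assms by blast
  finally show ?thesis .
qed

lemma marginal_mono_if_pairwise_supermodular:
  fixes g :: "'a set \<Rightarrow> real"
  assumes pair: "\<And>T x y. insert x (insert y T) \<subseteq> N \<Longrightarrow> x \<notin> T \<Longrightarrow> y \<notin> T \<Longrightarrow> x \<noteq> y \<Longrightarrow>
      g (insert x T) + g (insert y T) \<le> g (insert x (insert y T)) + g T"
    and "T' \<subseteq> T" "insert x T \<subseteq> N" "x \<notin> T" "finite T"
  shows "g (insert x T') - g T' \<le> g (insert x T) - g T"
proof -
  have marginal_grows: "g (insert x T') - g T' \<le> g (insert x (T' \<union> D)) - g (T' \<union> D)"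
    if "finite D" "D \<subseteq> N - insert x T'" for D
    using that
  proof (induction D rule: finite_induct)
    case (insert d D)
    have "g (insert x (T' \<union> D)) + g (insert d (T' \<union> D))
        \<le> g (insert x (insert d (T' \<union> D))) + g (T' \<union> D)"
    proof (rule pair)
      show "insert x (insert d (T' \<union> D)) \<subseteq> N"
        using insert.prems assms(2,3) by blast
      show "x \<notin> T' \<union> D" "d \<notin> T' \<union> D" "x \<noteq> d"
        using insert.hyps insert.prems assms(2,4) by auto
    qed
    moreover have "g (insert x T') - g T' \<le> g (insert x (T' \<union> D)) - g (T' \<union> D)"
      using insert by simp
    ultimately show ?case
      by (simp add: insert_commute)
  qed simp
  have "finite (T - T')" "T - T' \<subseteq> N - insert x T'"
    using assms(3-5) by auto
  from marginal_grows[OF this]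
  have "g (insert x T') - g T' \<le> g (insert x (T' \<union> (T - T'))) - g (T' \<union> (T - T'))" .
  also have "T' \<union> (T - T') = T"
    using assms(2) by blast
  finally show ?thesis .
qed

lemma sum_PiE_insert:
  assumes "y \<notin> T"
  shows "(\<Sum>w\<in>PiE (insert y T) V. G w) = (\<Sum>u\<in>PiE T V. \<Sum>a\<in>V y. G (u(y := a)))"
proof -
  have "(\<Sum>w\<in>PiE (insert y T) V. G w) = (\<Sum>(a, u)\<in>V y \<times> PiE T V. G (u(y := a)))"
    by (subst PiE_insert_eq, subst sum.reindex[OF inj_combinator[OF assms]]) (simp add: case_prod_beta)
  also have "\<dots> = (\<Sum>u\<in>PiE T V. \<Sum>a\<in>V y. G (u(y := a)))"
    unfolding sum.cartesian_product[symmetric] by (rule sum.swap)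
  finally show ?thesis .
qed

lemma measure_mult_cond_var_event:
  fixes g :: "'a \<Rightarrow> real"
  assumes A: "A \<in> sets M" and pos: "measure M A > 0"
    and g: "set_integrable M A g" and g2: "set_integrable M A (\<lambda>\<omega>. (g \<omega>)\<^sup>2)"
  shows "measure M A * cond_var_event M A g
       = (LINT \<omega>:A|M. (g \<omega>)\<^sup>2) - (LINT \<omega>:A|M. g \<omega>)\<^sup>2 / measure M A"
proof -
  define m where "m = cond_exp_event M A g"
  have "emeasure M A \<noteq> \<infinity>"
    using pos by (auto simp: measure_def)
  then have const: "set_integrable M A (\<lambda>_. m\<^sup>2)"
    using A by (simp add: set_integrable_def less_top)
  have "(LINT \<omega>:A|M. (g \<omega> - m)\<^sup>2) = (LINT \<omega>:A|M. (g \<omega>)\<^sup>2 - 2 * m * g \<omega> + m\<^sup>2)"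
    by (simp add: power2_diff algebra_simps)
  also have "\<dots> = (LINT \<omega>:A|M. (g \<omega>)\<^sup>2) - 2 * m * (LINT \<omega>:A|M. g \<omega>) + m\<^sup>2 * measure M A"
    using A g g2 const \<open>emeasure M A \<noteq> \<infinity>\<close> by (simp add: set_integral_const)
  finally show ?thesis
    using pos unfolding cond_var_event_def m_def cond_exp_event_def
    by (simp add: field_simps power2_eq_square)
qed

lemma complement_budget_approx_iff:
  fixes h :: "'a set \<Rightarrow> real" and c :: "'a \<Rightarrow> real"
  assumes "finite N" "S \<subseteq> N"
  shows "(sum c S \<ge> sum c N - C \<and>
          h (N - S) \<le> \<alpha> * Min {h (N - S') | S'. S' \<subseteq> N \<and> sum c S' \<ge> sum c N - C})
     \<longleftrightarrow> (sum c (N - S) \<le> C \<and> h (N - S) \<le> \<alpha> * Min {h T | T. T \<subseteq> N \<and> sum c T \<le> C})"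
proof -
  have sum_compl: "sum c (N - S') = sum c N - sum c S'" if "S' \<subseteq> N" for S'
    using that assms(1) by (simp add: sum_diff finite_subset)
  have "{h (N - S') | S'. S' \<subseteq> N \<and> sum c S' \<ge> sum c N - C} = {h T | T. T \<subseteq> N \<and> sum c T \<le> C}"
  proof (intro equalityI subsetI)
    fix z assume "z \<in> {h (N - S') | S'. S' \<subseteq> N \<and> sum c S' \<ge> sum c N - C}"
    then obtain S' where "z = h (N - S')" "S' \<subseteq> N" "sum c S' \<ge> sum c N - C"
      by blast
    moreover have "sum c (N - S') \<le> C"
      using calculation sum_compl[of S'] by linarith
    ultimately show "z \<in> {h T | T. T \<subseteq> N \<and> sum c T \<le> C}"
      by blast
  next
    fix z assume "z \<in> {h T | T. T \<subseteq> N \<and> sum c T \<le> C}"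
    then obtain T where "z = h T" "T \<subseteq> N" "sum c T \<le> C"
      by blast
    then have "z = h (N - (N - T))" "N - T \<subseteq> N" "sum c (N - T) \<ge> sum c N - C"
      using sum_compl[of T] by (auto simp: double_diff)
    then show "z \<in> {h (N - S') | S'. S' \<subseteq> N \<and> sum c S' \<ge> sum c N - C}"
      by blast
  qed
  moreover have "sum c S \<ge> sum c N - C \<longleftrightarrow> sum c (N - S) \<le> C"
    using sum_compl[OF assms(2)] by linarith
  ultimately show ?thesis
    by simp
qed

locale finite_random_vector = prob_space M for M :: "'a measure" +
  fixes n :: nat and X :: "nat \<Rightarrow> 'a \<Rightarrow> real" and V :: "nat \<Rightarrow> real set"
  assumes random_variable_X: "\<And>i. i < n \<Longrightarrow> random_variable borel (X i)"
    and finite_V: "\<And>i. i < n \<Longrightarrow> finite (V i)"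
    and X_in_V: "\<And>i \<omega>. i < n \<Longrightarrow> \<omega> \<in> space M \<Longrightarrow> X i \<omega> \<in> V i"
begin

abbreviation X_vector :: "'a \<Rightarrow> nat \<Rightarrow> real" where
  "X_vector \<omega> \<equiv> \<lambda>i\<in>{..<n}. X i \<omega>"

definition cell_integral :: "('a \<Rightarrow> real) \<Rightarrow> nat set \<Rightarrow> (nat \<Rightarrow> real) \<Rightarrow> real" where
  "cell_integral g T w = (LINT \<omega>:event_eq M X T w|M. g \<omega>)"

text \<open>The second moment of the conditional expectation of g given X_T; cells of
  probability zero contribute nothing because x / 0 = 0.\<close>
definition cond_mean_sq :: "('a \<Rightarrow> real) \<Rightarrow> nat set \<Rightarrow> real" where
  "cond_mean_sq g T = (\<Sum>w\<in>PiE T V. (cell_integral g T w)\<^sup>2 / prob (event_eq M X T w))"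

lemma X_eq_in_events:
  assumes "i < n"
  shows "{\<omega> \<in> space M. X i \<omega> = a} \<in> events"
proof -
  have "X i -` {a} \<inter> space M \<in> events"
    by (rule measurable_sets[OF random_variable_X[OF assms]]) simp
  moreover have "X i -` {a} \<inter> space M = {\<omega> \<in> space M. X i \<omega> = a}"
    by auto
  ultimately show ?thesis
    by simp
qed

lemma event_eq_in_events: "T \<subseteq> {..<n} \<Longrightarrow> event_eq M X T w \<in> events"
  unfolding event_eq_def
  by (rule sets.sets_Collect_finite_All) (auto intro!: X_eq_in_events dest: finite_subset)

lemma X_vector_measurable: "X_vector \<in> M \<rightarrow>\<^sub>M count_space (PiE {..<n} V)"
proof -
  have "countable (PiE {..<n} V)"
    using finite_V by (auto intro!: countable_finite finite_PiE)
  moreover have "X_vector \<omega> \<in> PiE {..<n} V" if "\<omega> \<in> space M" for \<omega>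
    using X_in_V that by (auto simp: PiE_iff)
  moreover have "X_vector -` {v} \<inter> space M \<in> events" if "v \<in> PiE {..<n} V" for v
  proof -
    have "X_vector -` {v} \<inter> space M = event_eq M X {..<n} v"
      using that unfolding event_eq_def by (auto simp: fun_eq_iff PiE_def extensional_def)
    then show ?thesis
      using event_eq_in_events by simp
  qed
  ultimately show ?thesis
    by (simp add: measurable_count_space_eq_countable)
qed

lemma integrable_fun_X_vector: "integrable M (\<lambda>\<omega>. h (X_vector \<omega>) :: real)"
proof (rule integrable_const_bound[where B="\<Sum>v\<in>PiE {..<n} V. \<bar>h v\<bar>"])
  have "finite (PiE {..<n} V)"
    using finite_V by (auto intro!: finite_PiE)
  moreover have "X_vector \<omega> \<in> PiE {..<n} V" if "\<omega> \<in> space M" for \<omega>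
    using X_in_V that by (auto simp: PiE_iff)
  ultimately show "AE \<omega> in M. norm (h (X_vector \<omega>)) \<le> (\<Sum>v\<in>PiE {..<n} V. \<bar>h v\<bar>)"
    using member_le_sum[of _ "PiE {..<n} V" "\<lambda>v. \<bar>h v\<bar>"] by (auto intro!: AE_I2)
  show "(\<lambda>\<omega>. h (X_vector \<omega>)) \<in> borel_measurable M"
    by (rule measurable_compose[OF X_vector_measurable]) simp
qed

lemma indicator_event_eq_insert:
  assumes "insert y T \<subseteq> {..<n}" "y \<notin> T" "\<omega> \<in> space M"
  shows "indicator (event_eq M X T w) \<omega>
       = (\<Sum>a\<in>V y. indicator (event_eq M X (insert y T) (w(y := a))) \<omega> :: real)"
proof -
  have "(\<Sum>a\<in>V y. indicator (event_eq M X (insert y T) (w(y := a))) \<omega> :: real)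
      = (\<Sum>a\<in>V y. if a = X y \<omega> then indicator (event_eq M X T w) \<omega> else 0)"
    using assms(2,3) by (intro sum.cong) (auto simp: event_eq_def indicator_def)
  also have "\<dots> = indicator (event_eq M X T w) \<omega>"
    using assms finite_V X_in_V by (simp add: sum.delta')
  finally show ?thesis ..
qed

lemma cell_integral_insert:
  assumes "insert y T \<subseteq> {..<n}" "y \<notin> T" "integrable M g"
  shows "cell_integral g T w = (\<Sum>a\<in>V y. cell_integral g (insert y T) (w(y := a)))"
proof -
  have "cell_integral g T w
      = (LINT \<omega>|M. (\<Sum>a\<in>V y. indicator (event_eq M X (insert y T) (w(y := a))) \<omega> *\<^sub>R g \<omega>))"
    unfolding cell_integral_def set_lebesgue_integral_def
    by (intro Bochner_Integration.integral_cong)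
       (simp_all add: indicator_event_eq_insert[OF assms(1,2)] sum_distrib_right)
  also have "\<dots> = (\<Sum>a\<in>V y. cell_integral g (insert y T) (w(y := a)))"
    unfolding cell_integral_def set_lebesgue_integral_def
    using integrable_mult_indicator[OF event_eq_in_events[OF assms(1)] assms(3)]
    by (intro Bochner_Integration.integral_sum) auto
  finally show ?thesis .
qed

lemma prob_event_eq_insert:
  assumes "insert y T \<subseteq> {..<n}" "y \<notin> T"
  shows "prob (event_eq M X T w) = (\<Sum>a\<in>V y. prob (event_eq M X (insert y T) (w(y := a))))"
proof -
  have "prob (event_eq M X T' w') = cell_integral (\<lambda>_. 1) T' w'" if "T' \<subseteq> {..<n}" for T' w'
    unfolding cell_integral_def using event_eq_in_events[OF that] by (simp add: set_integral_const)
  then show ?thesis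
    using cell_integral_insert[OF assms, of "\<lambda>_. 1"] assms(1) by simp
qed

lemma sum_prob_X_eq: "i < n \<Longrightarrow> (\<Sum>a\<in>V i. prob {\<omega> \<in> space M. X i \<omega> = a}) = 1"
  using prob_event_eq_insert[of i "{}" "\<lambda>_. 0"] by (simp add: event_eq_def prob_space)

lemma sum_cell_integral:
  assumes "T \<subseteq> {..<n}" "integrable M g"
  shows "(\<Sum>w\<in>PiE T V. cell_integral g T w) = expectation g"
proof -
  have "finite T"
    using assms(1) finite_subset by blast
  then show ?thesis
    using assms(1)
  proof (induction T rule: finite_induct)
    case empty
    have "event_eq M X {} (\<lambda>_. undefined) = space M"
      by (simp add: event_eq_def)
    then show ?case
      by (simp add: cell_integral_def set_integral_space[OF assms(2)])
  next
    case (insert y T)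
    then show ?case
      by (simp add: sum_PiE_insert cell_integral_insert[OF _ _ assms(2), symmetric])
  qed
qed

lemma cell_integral_null:
  assumes "T \<subseteq> {..<n}" "prob (event_eq M X T w) = 0"
  shows "cell_integral g T w = 0"
proof -
  have "event_eq M X T w \<in> null_sets M"
    using assms event_eq_in_events[OF assms(1)] by (auto simp: emeasure_eq_measure)
  then have "AE \<omega> in M. indicator (event_eq M X T w) \<omega> *\<^sub>R g \<omega> = 0"
    by (auto dest!: AE_not_in elim!: AE_mp)
  then show ?thesis
    unfolding cell_integral_def set_lebesgue_integral_def by (rule integral_eq_zero_AE)
qed

lemma EVar_eq_cond_mean_sq:
  assumes T: "T \<subseteq> {..<n}"
  shows "EVar M n X V f T
       = expectation (\<lambda>\<omega>. (f (X_vector \<omega>))\<^sup>2) - cond_mean_sq (\<lambda>\<omega>. f (X_vector \<omega>)) T"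
proof -
  let ?Y = "\<lambda>\<omega>. f (X_vector \<omega>)" and ?Y2 = "\<lambda>\<omega>. (f (X_vector \<omega>))\<^sup>2"
  have cell_term: "(if prob (event_eq M X T w) > 0
        then prob (event_eq M X T w) * cond_var_event M (event_eq M X T w) ?Y else 0)
      = cell_integral ?Y2 T w - (cell_integral ?Y T w)\<^sup>2 / prob (event_eq M X T w)" for w
  proof (cases "prob (event_eq M X T w) > 0")
    case True
    have "set_integrable M (event_eq M X T w) (\<lambda>\<omega>. h (X_vector \<omega>))" for h :: "_ \<Rightarrow> real"
      unfolding set_integrable_def
      by (rule integrable_mult_indicator[OF event_eq_in_events[OF T] integrable_fun_X_vector])
    from measure_mult_cond_var_event[OF event_eq_in_events[OF T] True this[of f] this[of "\<lambda>v. (f v)\<^sup>2"]]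
    show ?thesis
      using True unfolding cell_integral_def by simp
  next
    case False
    then have "prob (event_eq M X T w) = 0"
      using measure_nonneg[of M "event_eq M X T w"] by linarith
    then show ?thesis
      using cell_integral_null[OF T] by simp
  qed
  have "EVar M n X V f T
      = (\<Sum>w\<in>PiE T V. cell_integral ?Y2 T w) - (\<Sum>w\<in>PiE T V. (cell_integral ?Y T w)\<^sup>2 / prob (event_eq M X T w))"
    unfolding EVar_def cell_term by (rule sum_subtractf)
  then show ?thesis
    unfolding cond_mean_sq_def using sum_cell_integral[OF T integrable_fun_X_vector] by simp
qed

lemma cond_mean_sq_insert_ge:
  assumes "insert y T \<subseteq> {..<n}" "y \<notin> T" "integrable M g"
  shows "cond_mean_sq g T \<le> cond_mean_sq g (insert y T)"
proof -
  let ?cell = "\<lambda>u a. cell_integral g (insert y T) (u(y := a))"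
    and ?prob = "\<lambda>u a. prob (event_eq M X (insert y T) (u(y := a)))"
  have "cond_mean_sq g T = (\<Sum>u\<in>PiE T V. (\<Sum>a\<in>V y. ?cell u a)\<^sup>2 / (\<Sum>a\<in>V y. ?prob u a))"
    unfolding cond_mean_sq_def cell_integral_insert[OF assms] prob_event_eq_insert[OF assms(1,2)] ..
  also have "\<dots> \<le> (\<Sum>u\<in>PiE T V. \<Sum>a\<in>V y. (?cell u a)\<^sup>2 / ?prob u a)"
    using finite_V assms(1) cell_integral_null[OF assms(1)]
    by (intro sum_mono Sedrakyan_inequality) auto
  also have "\<dots> = cond_mean_sq g (insert y T)"
    unfolding cond_mean_sq_def sum_PiE_insert[OF assms(2)] ..
  finally show ?thesis .
qed

lemma cond_mean_sq_mono:
  assumes "T' \<subseteq> T" "T \<subseteq> {..<n}" "integrable M g"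
  shows "cond_mean_sq g T' \<le> cond_mean_sq g T"
  using mono_if_insert_le[of "{..<n}" "cond_mean_sq g", OF cond_mean_sq_insert_ge] assms
  by (meson finite_lessThan finite_subset)

lemma EVarbar_eq_cond_mean_sq:
  "EVarbar M n X V f S
     = expectation (\<lambda>\<omega>. (f (X_vector \<omega>))\<^sup>2) - cond_mean_sq (\<lambda>\<omega>. f (X_vector \<omega>)) ({..<n} - S)"
  unfolding EVarbar_def by (rule EVar_eq_cond_mean_sq) auto

lemma EVarbar_mono: "S1 \<subseteq> S2 \<Longrightarrow> EVarbar M n X V f S1 \<le> EVarbar M n X V f S2"
  unfolding EVarbar_eq_cond_mean_sq
  by (simp add: cond_mean_sq_mono integrable_fun_X_vector Diff_mono)

end

locale indep_finite_random_vector = finite_random_vector +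
  assumes indep: "indep_vars (\<lambda>_. borel) X {..<n}"
begin

lemma prob_event_eq_prod:
  assumes "T \<subseteq> {..<n}"
  shows "prob (event_eq M X T w) = (\<Prod>i\<in>T. prob {\<omega> \<in> space M. X i \<omega> = w i})"
proof (cases "T = {}")
  case True
  then show ?thesis
    by (simp add: event_eq_def prob_space)
next
  case False
  have "event_eq M X T w = (\<Inter>i\<in>T. X i -` {w i} \<inter> space M)"
    using False unfolding event_eq_def by auto
  moreover have "prob (\<Inter>i\<in>T. X i -` {w i} \<inter> space M) = (\<Prod>i\<in>T. prob (X i -` {w i} \<inter> space M))"
    using indep assms False finite_subset[OF assms] unfolding indep_vars_def2
    by (intro indep_setsD[where F="\<lambda>i. {X i -` A \<inter> space M |A. A \<in> sets borel}"]) auto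
  moreover have "X i -` {w i} \<inter> space M = {\<omega> \<in> space M. X i \<omega> = w i}" for i
    by auto
  ultimately show ?thesis
    by simp
qed

lemma prob_event_eq_insert_indep:
  assumes "insert y T \<subseteq> {..<n}" "y \<notin> T"
  shows "prob (event_eq M X (insert y T) (w(y := a)))
       = prob {\<omega> \<in> space M. X y \<omega> = a} * prob (event_eq M X T w)"
proof -
  have "(\<Prod>i\<in>T. prob {\<omega> \<in> space M. X i \<omega> = (w(y := a)) i}) = (\<Prod>i\<in>T. prob {\<omega> \<in> space M. X i \<omega> = w i})"
    using assms(2) by (intro prod.cong) auto
  then show ?thesis
    using assms finite_subset[OF assms(1)] by (simp add: prob_event_eq_prod)
qed

lemma cond_mean_sq_pairwise_supermodular:
  assumes xyT: "insert x (insert y T) \<subseteq> {..<n}" and "x \<notin> T" "y \<notin> T" "x \<noteq> y"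
    and g: "integrable M g"
  shows "cond_mean_sq g (insert x T) + cond_mean_sq g (insert y T)
       \<le> cond_mean_sq g (insert x (insert y T)) + cond_mean_sq g T"
proof -
  define \<alpha> \<beta> where "\<alpha> a = prob {\<omega> \<in> space M. X x \<omega> = a}" and "\<beta> b = prob {\<omega> \<in> space M. X y \<omega> = b}"
    for a b
  define c where "c u = prob (event_eq M X T u)" for u
  define I where "I u a b = cell_integral g (insert x (insert y T)) (u(y := b, x := a))" for u a b
  have yT: "insert y T \<subseteq> {..<n}"
    and "x \<notin> insert y T" "y \<notin> insert x T"
    using assms by auto
  have prob_xy: "prob (event_eq M X (insert x (insert y T)) (u(y := b, x := a))) = \<alpha> a * (\<beta> b * c u)"
    and prob_x: "prob (event_eq M X (insert x T) (u(x := a))) = \<alpha> a * c u"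
    and prob_y: "prob (event_eq M X (insert y T) (u(y := b))) = \<beta> b * c u" for u a b
    using assms unfolding \<alpha>_def \<beta>_def c_def by (simp_all add: prob_event_eq_insert_indep)
  have cell_y: "cell_integral g (insert y T) (u(y := b)) = (\<Sum>a\<in>V x. I u a b)" for u b
    unfolding I_def using cell_integral_insert[OF xyT \<open>x \<notin> insert y T\<close> g] .
  have cell_x: "cell_integral g (insert x T) (u(x := a)) = (\<Sum>b\<in>V y. I u a b)" for u a
  proof -
    have "insert y (insert x T) \<subseteq> {..<n}"
      using xyT by auto
    from cell_integral_insert[OF this \<open>y \<notin> insert x T\<close> g] show ?thesis
      unfolding I_def by (simp add: insert_commute fun_upd_twist[OF \<open>x \<noteq> y\<close>])
  qed
  have cell: "cell_integral g T u = (\<Sum>b\<in>V y. \<Sum>a\<in>V x. I u a b)" for u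
    unfolding cell_integral_insert[OF yT \<open>y \<notin> T\<close> g] cell_y ..
  have Q_xy: "cond_mean_sq g (insert x (insert y T))
      = (\<Sum>u\<in>PiE T V. \<Sum>b\<in>V y. \<Sum>a\<in>V x. (I u a b)\<^sup>2 / (\<alpha> a * (\<beta> b * c u)))"
    unfolding cond_mean_sq_def sum_PiE_insert[OF \<open>x \<notin> insert y T\<close>] sum_PiE_insert[OF \<open>y \<notin> T\<close>]
    by (simp only: I_def prob_xy)
  have Q_y: "cond_mean_sq g (insert y T) = (\<Sum>u\<in>PiE T V. \<Sum>b\<in>V y. (\<Sum>a\<in>V x. I u a b)\<^sup>2 / (\<beta> b * c u))"
    unfolding cond_mean_sq_def sum_PiE_insert[OF \<open>y \<notin> T\<close>] by (simp only: cell_y prob_y)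
  have Q_x: "cond_mean_sq g (insert x T) = (\<Sum>u\<in>PiE T V. \<Sum>a\<in>V x. (\<Sum>b\<in>V y. I u a b)\<^sup>2 / (\<alpha> a * c u))"
    unfolding cond_mean_sq_def sum_PiE_insert[OF \<open>x \<notin> T\<close>] by (simp only: cell_x prob_x)
  have Q_T: "cond_mean_sq g T = (\<Sum>u\<in>PiE T V. (\<Sum>b\<in>V y. \<Sum>a\<in>V x. I u a b)\<^sup>2 / c u)"
    unfolding cond_mean_sq_def cell c_def ..
  have cellwise: "(\<Sum>b\<in>V y. (\<Sum>a\<in>V x. I u a b)\<^sup>2 / (\<beta> b * c u)) + (\<Sum>a\<in>V x. (\<Sum>b\<in>V y. I u a b)\<^sup>2 / (\<alpha> a * c u))
      \<le> (\<Sum>b\<in>V y. \<Sum>a\<in>V x. (I u a b)\<^sup>2 / (\<alpha> a * (\<beta> b * c u))) + (\<Sum>b\<in>V y. \<Sum>a\<in>V x. I u a b)\<^sup>2 / c u"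
    for u
  proof (rule marginal_square_sums_le_scaled)
    show "I u a b = 0" if "\<alpha> a * \<beta> b = 0" for a b
      unfolding I_def using that xyT by (intro cell_integral_null) (auto simp: prob_xy)
    show "finite (V x)" "finite (V y)"
      using xyT finite_V by auto
    show "(\<Sum>a\<in>V x. \<alpha> a) = 1" "(\<Sum>b\<in>V y. \<beta> b) = 1"
      using xyT sum_prob_X_eq unfolding \<alpha>_def \<beta>_def by auto
  qed (simp_all add: \<alpha>_def \<beta>_def c_def)
  have "cond_mean_sq g (insert y T) + cond_mean_sq g (insert x T)
      \<le> cond_mean_sq g (insert x (insert y T)) + cond_mean_sq g T"
    unfolding Q_xy Q_y Q_x Q_T sum.distrib[symmetric] by (rule sum_mono) (rule cellwise)
  then show ?thesis
    by simp
qed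

lemma cond_mean_sq_marginal_mono:
  assumes "T' \<subseteq> T" "insert x T \<subseteq> {..<n}" "x \<notin> T" "integrable M g"
  shows "cond_mean_sq g (insert x T') - cond_mean_sq g T' \<le> cond_mean_sq g (insert x T) - cond_mean_sq g T"
proof (rule marginal_mono_if_pairwise_supermodular[of "{..<n}"])
  show "finite T"
    using assms(2) finite_subset by auto
qed (use assms cond_mean_sq_pairwise_supermodular in auto)

lemma EVarbar_submodular:
  assumes "S1 \<subseteq> S2" "x \<in> {..<n} - S2"
  shows "EVarbar M n X V f (insert x S2) - EVarbar M n X V f S2
       \<le> EVarbar M n X V f (insert x S1) - EVarbar M n X V f S1"
proof -
  have "{..<n} - S1 = insert x ({..<n} - insert x S1)" "{..<n} - S2 = insert x ({..<n} - insert x S2)"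
    using assms by auto
  moreover have "cond_mean_sq (\<lambda>\<omega>. f (X_vector \<omega>)) (insert x ({..<n} - insert x S2))
        - cond_mean_sq (\<lambda>\<omega>. f (X_vector \<omega>)) ({..<n} - insert x S2)
      \<le> cond_mean_sq (\<lambda>\<omega>. f (X_vector \<omega>)) (insert x ({..<n} - insert x S1))
        - cond_mean_sq (\<lambda>\<omega>. f (X_vector \<omega>)) ({..<n} - insert x S1)"
    using assms by (intro cond_mean_sq_marginal_mono integrable_fun_X_vector) auto
  ultimately show ?thesis
    unfolding EVarbar_eq_cond_mean_sq by simp
qed

end

theorem mainTheorem4:
  fixes M :: "'a measure" and n :: nat and X :: "nat \<Rightarrow> 'a \<Rightarrow> real"
    and V :: "nat \<Rightarrow> real set" and f :: "(nat \<Rightarrow> real) \<Rightarrow> real"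
    and c :: "nat \<Rightarrow> real" and C :: real
  assumes "prob_space M"
    and "prob_space.indep_vars M (\<lambda>_. borel) X {..<n}"
    and "\<forall>i<n. finite (V i)"
    and "\<forall>i<n. \<forall>\<omega>\<in>space M. X i \<omega> \<in> V i"
    and "\<forall>i<n. c i \<ge> 0"
    and "C \<ge> 0"
  shows
    "(\<forall>S1 S2. S1 \<subseteq> S2 \<and> S2 \<subseteq> {..<n} \<longrightarrow> EVarbar M n X V f S1 \<le> EVarbar M n X V f S2)
   \<and> (\<forall>S1 S2 x. S1 \<subset> S2 \<and> S2 \<subseteq> {..<n} \<and> x \<in> {..<n} - S2 \<longrightarrow>
        EVarbar M n X V f (insert x S1) - EVarbar M n X V f S1
          \<ge> EVarbar M n X V f (insert x S2) - EVarbar M n X V f S2)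
   \<and> (\<forall>\<alpha>::real. \<alpha> \<ge> 1 \<longrightarrow> (\<forall>S. S \<subseteq> {..<n} \<longrightarrow>
        ((sum c S \<ge> (\<Sum>i<n. c i) - C \<and>
          EVarbar M n X V f S \<le> \<alpha> * Min {EVarbar M n X V f S' | S'.
              S' \<subseteq> {..<n} \<and> sum c S' \<ge> (\<Sum>i<n. c i) - C})
         \<longleftrightarrow>
         (sum c ({..<n} - S) \<le> C \<and>
          EVar M n X V f ({..<n} - S) \<le> \<alpha> * Min {EVar M n X V f T' | T'.
              T' \<subseteq> {..<n} \<and> sum c T' \<le> C}))))"
proof -
  interpret prob_space M
    by (rule assms(1))
  have "random_variable borel (X i)" if "i < n" for i
    using assms(2) that unfolding indep_vars_def2 by blast
  interpret indep_finite_random_vector M n X V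
    by unfold_locales (use assms \<open>\<And>i. i < n \<Longrightarrow> random_variable borel (X i)\<close> in auto)
  show ?thesis
    using EVarbar_mono EVarbar_submodular
      complement_budget_approx_iff[where h = "EVar M n X V f" and N = "{..<n}"]
    unfolding EVarbar_def by (intro conjI allI impI) (blast, blast, simp)
qed

end
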